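(* Let $m\ge1$ and let $p\ge 2m-1$ be a prime. Let $0\le k\le\lfloor\frac{m+1}{2}\rfloor+1$ and let $n$ be a non-negative integer with $n<N_k$. Then $$\mathrm{ex}(n,m,p)\ge \nu_p(n!)-(k-1).$$
   Context: Partitions $\lambda=(\lambda_1\ge\dots\ge\lambda_r\ge0)$ may have zero parts; the degree sequence is $n_\lambda=(\lambda_r,\lambda_{r-1}+1,\dots,\lambda_1+r-1)=(n_{\lambda,1},\dots,n_{\lambda,r})$ and $\Delta(n_\lambda)=\prod_{i<j}(n_{\lambda,j}-n_{\lambda,i})$. $H(\lambda)=n_{\lambda,1}!\cdots n_{\lambda,r}!/\Delta(n_\lambda)$ (the product of hook lengths) and $F_\lambda=|\lambda|!/H(\lambda)$ is the dimension of the irreducible representation of the symmetric group $S_{|\lambda|}$ indexed by $\lambda$. $\nu_p$ is the $p$-adic valuation. Removing a $2$-hook means replacing an entry $a$ of $n_\lambda$ by $a-2\ge0$ with $a-2\notin n_\lambda$; removing $2$-hooks until impossible yields the $2$-core, a staircase $(m',m'-1,\dots,1)$ padded with zeros, of size $\binom{m'+1}2$. Define $\mathrm{ex}(n,m,p)=\min\{\nu_p(F_\lambda):\lambda\vdash n,\ \lambda\text{ has }2\text{-core of size }\binom{m+1}{2}\}$ (the minimum over the empty set is $+\infty$). For $0\le k\le\lfloor\frac{m+1}2\rfloor$ put $N_k=kp-k(2(m-k)+1)+\binom{m+1}{2}$, and put $N_{\lfloor\frac{m+1}2\rfloor+1}=(\lfloor\frac{m+1}2\rfloor+1)p$. *)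

theory Defs
  imports Complex_Main "HOL-Computational_Algebra.Primes" "HOL-Library.Extended_Real"
begin

(* A partition lambda = (lambda_1 >= ... >= lambda_r >= 0), zero parts allowed,
   represented as a list [lambda_1, ..., lambda_r]. *)
definition is_partition :: "nat list \<Rightarrow> bool" where
  "is_partition lam \<longleftrightarrow> sorted_wrt (\<ge>) lam"

(* Degree sequence n_lambda = (lambda_r, lambda_{r-1}+1, ..., lambda_1+r-1),
   0-indexed: deg lam j = lambda_{r-j} + j  for j < r. *)
definition deg :: "nat list \<Rightarrow> nat \<Rightarrow> nat" where
  "deg lam j = lam ! (length lam - 1 - j) + j"

definition Delta :: "nat list \<Rightarrow> int" where
  "Delta lam = (\<Prod>j<length lam. \<Prod>i<j. (int (deg lam j) - int (deg lam i)))"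

definition H :: "nat list \<Rightarrow> rat" where
  "H lam = of_int (\<Prod>j<length lam. fact (deg lam j)) / of_int (Delta lam)"

definition F :: "nat list \<Rightarrow> rat" where
  "F lam = fact (sum_list lam) / H lam"

(* the (integer) value of F_lambda, which is a positive integer *)
definition F_nat :: "nat list \<Rightarrow> nat" where
  "F_nat lam = nat \<lfloor>F lam\<rfloor>"

definition beta_set :: "nat list \<Rightarrow> nat set" where
  "beta_set lam = (\<lambda>j. deg lam j) ` {..<length lam}"

definition remove_2hook :: "nat set \<Rightarrow> nat set \<Rightarrow> bool" where
  "remove_2hook S T \<longleftrightarrow>
     (\<exists>a\<in>S. a \<ge> 2 \<and> a - 2 \<notin> S \<and> T = insert (a - 2) (S - {a}))"

(* size of the partition whose degree sequence has entry set S *)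
definition beta_size :: "nat set \<Rightarrow> nat" where
  "beta_size S = \<Sum>S - (card S choose 2)"

definition has_2core_size :: "nat list \<Rightarrow> nat \<Rightarrow> bool" where
  "has_2core_size lam c \<longleftrightarrow>
     (\<exists>T. remove_2hook\<^sup>*\<^sup>* (beta_set lam) T \<and> (\<nexists>U. remove_2hook T U) \<and> beta_size T = c)"

(* ex(n,m,p) = min { nu_p(F_lambda) : lambda |- n, 2-core of size binom(m+1,2) },
   +infinity for the empty set *)
definition ex :: "nat \<Rightarrow> nat \<Rightarrow> nat \<Rightarrow> ereal" where
  "ex n m p = Inf {ereal (real (multiplicity p (F_nat lam))) | lam.
       is_partition lam \<and> sum_list lam = n \<and> has_2core_size lam (Suc m choose 2)}"

definition NN :: "nat \<Rightarrow> nat \<Rightarrow> nat \<Rightarrow> int" where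
  "NN m p k =
     (if k \<le> (m + 1) div 2
      then int k * int p - int k * (2 * (int m - int k) + 1) + int (Suc m choose 2)
      else if k = (m + 1) div 2 + 1 then int k * int p else 0)"

end

theory Submission
  imports Defs
begin

text \<open>A partition is encoded by its beta-set X, and its hook lengths are the differences x - y
  of a bead x and a gap y < x. A partial fraction identity gives the branching rule
  n / H(lambda) = sum of 1 / H(mu) over the mu obtained by removing one box, so H(lambda) divides n!
  and nu_p(F_lambda) = nu_p(n!) - nu_p(H(lambda)). When n < p^2 every hook is below p^2, so
  nu_p(H(lambda)) is at most the number P of hooks divisible by p, which is the weight of the
  p-quotient; it remains to show P < k.
  The alternating sum d of (-1)^x over X is invariant under removing 2-hooks and the 2-core has
  size d(d-1)/2, so d is m+1 or -m. Passing to the p-core changes d by at most 2P, so the p-core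
  has size at least s(s-1)/2 with s = m+1-2P, and n = |p-core| + pP is then at least N_P,
  which is at least N_k when P >= k.\<close>

section \<open>Beta-sets and their weight\<close>

text \<open>The part of the partition belonging to the bead x is the number of gaps below x, so
  weight X is the size of the partition.\<close>

definition gaps_below :: "nat set \<Rightarrow> nat \<Rightarrow> nat" where
  "gaps_below X x = card {y. y < x \<and> y \<notin> X}"

definition weight :: "nat set \<Rightarrow> nat" where
  "weight X = (\<Sum>x\<in>X. gaps_below X x)"

lemma Suc_choose2: "Suc a choose 2 = (a choose 2) + a"
  by (simp add: numeral_2_eq_2 add.commute)

lemma two_times_choose2: "2 * (n choose 2) = n * (n - 1)"
  by (induct n) (auto simp: Suc_choose2 algebra_simps)

lemma two_times_Suc_choose2_int: "2 * int (Suc m choose 2) = int m * (int m + 1)"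
proof -
  have "2 * (Suc m choose 2) = Suc m * m" using two_times_choose2[of "Suc m"] by simp
  then have "int (2 * (Suc m choose 2)) = int (Suc m * m)" by simp
  then show ?thesis by (simp add: algebra_simps)
qed

lemma sum_card_less_eq_choose2:
  fixes X :: "nat set"
  assumes "finite X"
  shows "(\<Sum>x\<in>X. card {y\<in>X. y < x}) = card X choose 2"
  using assms
proof (induct X rule: finite_linorder_max_induct)
  case empty
  then show ?case by simp
next
  case (insert b A)
  then have "b \<notin> A" by auto
  have "(\<Sum>x\<in>insert b A. card {y\<in>insert b A. y < x}) =
        card {y\<in>insert b A. y < b} + (\<Sum>x\<in>A. card {y\<in>insert b A. y < x})"
    using insert \<open>b \<notin> A\<close> by simp
  also have "{y\<in>insert b A. y < b} = A" using insert by auto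
  also have "(\<Sum>x\<in>A. card {y\<in>insert b A. y < x}) = (\<Sum>x\<in>A. card {y\<in>A. y < x})"
    using insert by (intro sum.cong refl arg_cong[where f = card]) auto
  finally show ?case using insert \<open>b \<notin> A\<close> by (simp add: Suc_choose2)
qed

lemma card_less_plus_gaps_below:
  assumes "finite X"
  shows "x = card {y\<in>X. y < x} + gaps_below X x"
proof -
  have "{..<x} = {y\<in>X. y < x} \<union> {y. y < x \<and> y \<notin> X}" by auto
  moreover have "{y\<in>X. y < x} \<inter> {y. y < x \<and> y \<notin> X} = {}" by auto
  ultimately have "card {..<x} = card {y\<in>X. y < x} + card {y. y < x \<and> y \<notin> X}"
    by (metis (no_types, lifting) card_Un_disjoint finite_Un finite_lessThan)
  then show ?thesis by (simp add: gaps_below_def)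
qed

lemma sum_eq_choose2_plus_weight:
  assumes "finite X"
  shows "\<Sum>X = (card X choose 2) + weight X"
proof -
  have "\<Sum>X = (\<Sum>x\<in>X. card {y\<in>X. y < x} + gaps_below X x)"
    using card_less_plus_gaps_below[OF assms] by (intro sum.cong) auto
  also have "\<dots> = (card X choose 2) + weight X"
    by (simp add: sum.distrib sum_card_less_eq_choose2[OF assms] weight_def)
  finally show ?thesis .
qed

lemma beta_size_eq_weight: "finite X \<Longrightarrow> beta_size X = weight X"
  unfolding beta_size_def by (simp add: sum_eq_choose2_plus_weight)

lemma weight_insert_max:
  assumes "finite A" "\<forall>a\<in>A. a < b"
  shows "int (weight (insert b A)) = int (weight A) + int b - int (card A)" "card A \<le> b"
proof -
  have "b \<notin> A" using assms by auto
  have "A \<subseteq> {..<b}" using assms by auto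
  then show "card A \<le> b" using card_mono[of "{..<b}" A] by simp
  have "\<Sum>(insert b A) = b + \<Sum>A" using assms \<open>b \<notin> A\<close> by simp
  then have "(card (insert b A) choose 2) + weight (insert b A) = b + (card A choose 2) + weight A"
    using sum_eq_choose2_plus_weight assms by simp
  then show "int (weight (insert b A)) = int (weight A) + int b - int (card A)"
    using assms \<open>b \<notin> A\<close> by (simp add: Suc_choose2)
qed

lemma weight_lessThan: "weight {..<a} = 0"
  unfolding weight_def gaps_below_def by simp

lemma hook_le_weight:
  assumes "finite X" "x \<in> X" "y < x" "y \<notin> X"
  shows "x - y \<le> weight X"
proof -
  let ?M = "X \<inter> {y<..<x}"
  have "card ?M \<le> (\<Sum>z\<in>?M. gaps_below X z)"
  proof -
    have "1 \<le> gaps_below X z" if "z \<in> ?M" for z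
    proof -
      have "y \<in> {w. w < z \<and> w \<notin> X}" using that assms by auto
      then have "card {w. w < z \<and> w \<notin> X} > 0" by (subst card_gt_0_iff) auto
      then show ?thesis by (simp add: gaps_below_def)
    qed
    then have "(\<Sum>z\<in>?M. 1) \<le> (\<Sum>z\<in>?M. gaps_below X z)" by (rule sum_mono)
    then show ?thesis by simp
  qed
  then have "gaps_below X x + card ?M \<le> (\<Sum>z\<in>insert x ?M. gaps_below X z)" by simp
  also have "\<dots> \<le> weight X"
    unfolding weight_def by (rule sum_mono2) (use assms in auto)
  finally have bound: "gaps_below X x + card ?M \<le> weight X" .
  have "card ({y..<x} - X) \<le> gaps_below X x"
    unfolding gaps_below_def by (rule card_mono) auto
  moreover have "{y..<x} \<inter> X = ?M" using assms(4) by (auto simp: order.order_iff_strict)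
  moreover have "card {y..<x} = card ({y..<x} - X) + card ({y..<x} \<inter> X)"
    using card_Int_Diff[of "{y..<x}" X] by simp
  ultimately show ?thesis using bound by simp
qed

section \<open>The p-abacus: cores and quotients\<close>

definition runner :: "nat \<Rightarrow> nat set \<Rightarrow> nat \<Rightarrow> nat set" where
  "runner p X i = {q. i + p * q \<in> X}"

definition quotient_weight :: "nat \<Rightarrow> nat set \<Rightarrow> nat" where
  "quotient_weight p X = (\<Sum>i<p. weight (runner p X i))"

text \<open>The p-core slides the beads on every runner of the abacus to the top.\<close>

definition core :: "nat \<Rightarrow> nat set \<Rightarrow> nat set" where
  "core p X = {x. x div p < card (runner p X (x mod p))}"

lemma finite_runner: assumes "p > 0" "finite X" shows "finite (runner p X i)"
proof -
  have "inj (\<lambda>q. i + p * q)" using assms(1) by (auto simp: inj_def)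
  then have "finite ((\<lambda>q. i + p * q) -` X)" using assms(2) by (simp add: finite_vimageI)
  moreover have "runner p X i = (\<lambda>q. i + p * q) -` X" by (auto simp: runner_def)
  ultimately show ?thesis by simp
qed

lemma sum_by_runners:
  fixes f :: "nat \<Rightarrow> 'a::comm_monoid_add"
  assumes "p > 0" "finite X"
  shows "(\<Sum>x\<in>X. f x) = (\<Sum>i<p. \<Sum>q\<in>runner p X i. f (i + p * q))"
proof -
  have bij: "bij_betw (\<lambda>(i, q). i + p * q) (Sigma {..<p} (runner p X)) X"
    by (rule bij_betw_byWitness[where f' = "\<lambda>x. (x mod p, x div p)"])
      (use assms in \<open>auto simp: runner_def add.commute\<close>)
  have "(\<Sum>i<p. \<Sum>q\<in>runner p X i. f (i + p * q)) = (\<Sum>(i, q)\<in>Sigma {..<p} (runner p X). f (i + p * q))"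
    using finite_runner[OF assms] by (subst sum.Sigma) auto
  also have "\<dots> = (\<Sum>x\<in>X. f x)"
    using sum.reindex_bij_betw[OF bij, of f] by (simp add: case_prod_unfold)
  finally show ?thesis by simp
qed

lemma card_by_runners: assumes "p > 0" "finite X" shows "card X = (\<Sum>i<p. card (runner p X i))"
  using sum_by_runners[OF assms, of "\<lambda>_. (1::nat)"] by simp

lemma sum_set_by_runners:
  assumes "p > 0" "finite X"
  shows "\<Sum>X = (\<Sum>i<p. i * card (runner p X i) +
                      p * ((card (runner p X i) choose 2) + weight (runner p X i)))"
proof -
  have "\<Sum>X = (\<Sum>i<p. \<Sum>q\<in>runner p X i. i + p * q)"
    using sum_by_runners[OF assms, of "\<lambda>x. x"] by simp
  also have "\<dots> = (\<Sum>i<p. i * card (runner p X i) + p * \<Sum>(runner p X i))"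
    by (simp add: sum.distrib sum_distrib_left mult.commute)
  also have "\<dots> = (\<Sum>i<p. i * card (runner p X i) +
                      p * ((card (runner p X i) choose 2) + weight (runner p X i)))"
    using sum_eq_choose2_plus_weight finite_runner[OF assms] by simp
  finally show ?thesis .
qed

lemma runner_core: assumes "p > 0" "i < p" shows "runner p (core p X) i = {..<card (runner p X i)}"
  using assms by (auto simp: runner_def core_def)

lemma finite_core: assumes "p > 0" "finite X" shows "finite (core p X)"
proof -
  let ?r = "\<Sum>i<p. card (runner p X i)"
  have "core p X \<subseteq> {..<p * ?r + p}"
  proof
    fix x assume "x \<in> core p X"
    then have x: "x div p < card (runner p X (x mod p))" by (simp add: core_def)
    have "x mod p < p" using assms by simp
    then have "card (runner p X (x mod p)) \<le> ?r" by (intro member_le_sum) auto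
    then have "Suc (x div p) \<le> ?r" using x by linarith
    then have "p * Suc (x div p) \<le> p * ?r" by (rule mult_le_mono2)
    then have "p + p * (x div p) \<le> p * ?r" by simp
    moreover have "x = p * (x div p) + x mod p" by simp
    ultimately have "x < p * ?r + p" using \<open>x mod p < p\<close> by linarith
    then show "x \<in> {..<p * ?r + p}" by simp
  qed
  then show ?thesis by (rule finite_subset) simp
qed

lemma card_core: assumes "p > 0" "finite X" shows "card (core p X) = card X"
  using card_by_runners[OF assms(1) finite_core[OF assms]] card_by_runners[OF assms]
    runner_core[OF assms(1)] by simp

text \<open>The quotient weight is the number of p-hooks removed on the way to the p-core.\<close>

lemma weight_eq_core_plus_quotient:
  assumes "p > 0" "finite X"
  shows "weight X = weight (core p X) + p * quotient_weight p X"
proof -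
  have fc: "finite (core p X)" using finite_core[OF assms] .
  have rc: "\<And>i. i < p \<Longrightarrow> card (runner p (core p X) i) = card (runner p X i)"
    "\<And>i. i < p \<Longrightarrow> weight (runner p (core p X) i) = 0"
    using runner_core[OF assms(1)] weight_lessThan by auto
  have s0: "\<Sum>(core p X) = (\<Sum>i<p. i * card (runner p X i) + p * (card (runner p X i) choose 2))"
    using sum_set_by_runners[OF assms(1) fc] rc by simp
  have s1: "\<Sum>X = (\<Sum>i<p. i * card (runner p X i) + p * (card (runner p X i) choose 2))
                  + p * quotient_weight p X"
    unfolding sum_set_by_runners[OF assms] quotient_weight_def
    by (simp add: sum.distrib sum_distrib_left algebra_simps)
  show ?thesis
    using sum_eq_choose2_plus_weight[OF assms(2)] sum_eq_choose2_plus_weight[OF fc] s0 s1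
      card_core[OF assms] by simp
qed

section \<open>The alternating sum of a beta-set\<close>

definition alt_sum :: "nat set \<Rightarrow> int" where
  "alt_sum X = (\<Sum>x\<in>X. (-1) ^ x)"

lemma alt_sum_diff_lessThan_card:
  assumes "finite X"
  shows "\<bar>alt_sum X - alt_sum {..<card X}\<bar> \<le> 2 * int (weight X)"
  using assms
proof (induct X rule: finite_linorder_max_induct)
  case empty
  then show ?case by (simp add: weight_def)
next
  case (insert b A)
  have bA: "b \<notin> A" using insert by auto
  note w = weight_insert_max[OF insert(1) insert(2)]
  have e1: "alt_sum (insert b A) = (-1) ^ b + alt_sum A"
    using insert bA by (simp add: alt_sum_def)
  have e2: "alt_sum {..<card (insert b A)} = alt_sum {..<card A} + (-1) ^ card A"
    using insert bA by (simp add: alt_sum_def)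
  have "\<bar>(-1::int) ^ b - (-1) ^ card A\<bar> \<le> 2 * (int b - int (card A))"
  proof (cases "b = card A")
    case False
    then have "int b - int (card A) \<ge> 1" using w(2) by linarith
    moreover have "\<bar>(-1::int) ^ b - (-1) ^ card A\<bar> \<le> 2"
      by (cases "even b"; cases "even (card A)") auto
    ultimately show ?thesis by (smt (verit))
  qed simp
  then show ?case using insert(3) e1 e2 w(1) by (smt (verit))
qed

lemma alt_sum_by_runners:
  assumes "odd p" "finite X"
  shows "alt_sum X = (\<Sum>i<p. (-1) ^ i * alt_sum (runner p X i))"
proof -
  have "p > 0" using assms by presburger
  then have "alt_sum X = (\<Sum>i<p. \<Sum>q\<in>runner p X i. (-1::int) ^ (i + p * q))"
    unfolding alt_sum_def using sum_by_runners assms(2) by blast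
  also have "\<dots> = (\<Sum>i<p. (-1) ^ i * alt_sum (runner p X i))"
    using assms(1) by (simp add: alt_sum_def power_add power_mult sum_distrib_left)
  finally show ?thesis .
qed

lemma alt_sum_diff_core:
  assumes "odd p" "finite X"
  shows "\<bar>alt_sum X - alt_sum (core p X)\<bar> \<le> 2 * int (quotient_weight p X)"
proof -
  have p0: "p > 0" using assms by presburger
  have "alt_sum X - alt_sum (core p X) =
      (\<Sum>i<p. (-1) ^ i * (alt_sum (runner p X i) - alt_sum {..<card (runner p X i)}))"
    unfolding alt_sum_by_runners[OF assms] alt_sum_by_runners[OF assms(1) finite_core[OF p0 assms(2)]]
    by (simp add: runner_core[OF p0] sum_subtractf[symmetric] right_diff_distrib)
  also have "\<bar>\<dots>\<bar> \<le> (\<Sum>i<p. \<bar>(-1) ^ i * (alt_sum (runner p X i) - alt_sum {..<card (runner p X i)})\<bar>)"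
    by (rule sum_abs)
  also have "\<dots> \<le> (\<Sum>i<p. 2 * int (weight (runner p X i)))"
    by (intro sum_mono)
      (simp add: abs_mult alt_sum_diff_lessThan_card[OF finite_runner[OF p0 assms(2)]])
  also have "\<dots> = 2 * int (quotient_weight p X)" by (simp add: quotient_weight_def sum_distrib_left)
  finally show ?thesis .
qed

text \<open>On the 2-abacus the alternating sum is the difference of the numbers of beads on the two
  runners, and these numbers determine the 2-core.\<close>

lemma weight_core_two:
  assumes "finite X"
  shows "2 * int (weight (core 2 X)) = alt_sum X * (alt_sum X - 1)"
proof -
  have p0: "(2::nat) > 0" by simp
  have fc: "finite (core 2 X)" using finite_core[OF p0 assms] .
  let ?a = "card (runner 2 X 0)" and ?b = "card (runner 2 X 1)"
  have rc: "card (runner 2 (core 2 X) 0) = ?a" "card (runner 2 (core 2 X) 1) = ?b"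
     "weight (runner 2 (core 2 X) 0) = 0" "weight (runner 2 (core 2 X) 1) = 0"
    using runner_core[OF p0, of _ X] weight_lessThan by auto
  have s: "\<Sum>(core 2 X) = ?b + 2 * (?a choose 2) + 2 * (?b choose 2)"
    using sum_set_by_runners[OF p0 fc] rc by (simp add: numeral_2_eq_2)
  have c: "card (core 2 X) = ?a + ?b"
    using card_by_runners[OF p0 fc] rc by (simp add: numeral_2_eq_2)
  have d: "alt_sum X = int ?a - int ?b"
    unfolding alt_sum_def using sum_by_runners[OF p0 assms, of "\<lambda>x. (-1::int) ^ x"]
    by (simp add: numeral_2_eq_2 power_add power_mult)
  have ch: "2 * int (n choose 2) = int n * (int n - 1)" for n
    using arg_cong[OF two_times_choose2[of n], of int] by (cases n) (auto simp: algebra_simps)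
  have "2 * int (weight (core 2 X)) =
      2 * int ?b + 2 * (2 * int (?a choose 2)) + 2 * (2 * int (?b choose 2)) - 2 * int (?a + ?b choose 2)"
    using sum_eq_choose2_plus_weight[OF fc] s c by simp
  then show ?thesis unfolding d ch by (simp add: algebra_simps)
qed

lemma alt_sum_bound_weight:
  assumes "finite X"
  shows "alt_sum X * (alt_sum X - 1) \<le> 2 * int (weight X)"
  using weight_core_two[OF assms] weight_eq_core_plus_quotient[of 2 X] assms by simp

lemma remove_2hook_finite_alt_sum:
  assumes "remove_2hook X Y" "finite X"
  shows "finite Y \<and> alt_sum Y = alt_sum X"
proof -
  obtain a where a: "a \<in> X" "a \<ge> 2" "a - 2 \<notin> X" "Y = insert (a - 2) (X - {a})"
    using assms(1) unfolding remove_2hook_def by blast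
  have "(-1::int) ^ a = (-1) ^ (a - 2) * (-1) ^ 2"
    using a(2) by (metis le_add_diff_inverse2 power_add)
  then have "(-1::int) ^ (a - 2) = (-1) ^ a" by simp
  moreover have "alt_sum Y = (-1) ^ (a - 2) + (alt_sum X - (-1) ^ a)"
    unfolding alt_sum_def a(4) using a assms(2) by (simp add: sum_diff1)
  ultimately show ?thesis using a assms(2) by simp
qed

lemma remove_2hooks_finite_alt_sum:
  assumes "remove_2hook\<^sup>*\<^sup>* X Y" "finite X"
  shows "finite Y \<and> alt_sum Y = alt_sum X"
  using assms by (induct rule: rtranclp_induct) (auto dest: remove_2hook_finite_alt_sum)

lemma no_2hook_downward_closed:
  assumes "\<nexists>U. remove_2hook X U"
  shows "i + 2 * q \<in> X \<Longrightarrow> q' \<le> q \<Longrightarrow> i + 2 * q' \<in> X"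
proof (induct q arbitrary: q')
  case (Suc q)
  have "i + 2 * q \<in> X"
  proof (rule ccontr)
    assume "i + 2 * q \<notin> X"
    then have "remove_2hook X (insert (i + 2 * q) (X - {i + 2 * Suc q}))"
      unfolding remove_2hook_def using Suc(2) by (intro bexI[of _ "i + 2 * Suc q"]) auto
    then show False using assms by blast
  qed
  then show ?case using Suc by (cases "q' = Suc q") auto
qed simp

lemma no_2hook_quotient_weight:
  assumes "\<nexists>U. remove_2hook X U"
  shows "quotient_weight 2 X = 0"
proof -
  have "gaps_below (runner 2 X i) q = 0" if "q \<in> runner 2 X i" for i q
  proof -
    have "{y. y < q \<and> y \<notin> runner 2 X i} = {}"
      using no_2hook_downward_closed[OF assms, of i q] that by (auto simp: runner_def)
    then show ?thesis by (simp add: gaps_below_def)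
  qed
  then show ?thesis by (simp add: quotient_weight_def weight_def)
qed

lemma has_2core_size_alt_sum:
  assumes "has_2core_size lam c"
  shows "2 * int c = alt_sum (beta_set lam) * (alt_sum (beta_set lam) - 1)"
proof -
  obtain T where T: "remove_2hook\<^sup>*\<^sup>* (beta_set lam) T" "\<nexists>U. remove_2hook T U" "beta_size T = c"
    using assms unfolding has_2core_size_def by blast
  have "finite (beta_set lam)" by (simp add: beta_set_def)
  then have fT: "finite T" and "alt_sum T = alt_sum (beta_set lam)"
    using remove_2hooks_finite_alt_sum[OF T(1)] by auto
  moreover have "c = weight (core 2 T)"
    using T(3) beta_size_eq_weight[OF fT] weight_eq_core_plus_quotient[of 2 T]
      no_2hook_quotient_weight[OF T(2)] fT by simp
  ultimately show ?thesis using weight_core_two[OF fT] by simp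
qed

lemma has_2core_size_Suc_choose2:
  assumes "has_2core_size lam (Suc m choose 2)"
  shows "alt_sum (beta_set lam) = int m + 1 \<or> alt_sum (beta_set lam) = - int m"
proof -
  let ?d = "alt_sum (beta_set lam)"
  have "(?d - (int m + 1)) * (?d + int m) = 0"
    using has_2core_size_alt_sum[OF assms] two_times_Suc_choose2_int[of m]
    by (simp add: algebra_simps)
  then show ?thesis by auto
qed

section \<open>Hook lengths and their p-adic valuation\<close>

text \<open>The hook lengths of the partition encoded by X are the differences x - y with x in X and
  y < x a gap of X.\<close>

definition hook_prod :: "nat set \<Rightarrow> nat" where
  "hook_prod X = (\<Prod>x\<in>X. \<Prod>y\<in>{y. y < x \<and> y \<notin> X}. x - y)"

definition diff_prod :: "nat set \<Rightarrow> nat" where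
  "diff_prod X = (\<Prod>x\<in>X. \<Prod>y\<in>{y\<in>X. y < x}. x - y)"

lemma hook_prod_pos: "finite X \<Longrightarrow> hook_prod X > 0"
  unfolding hook_prod_def by (auto intro!: prod_pos)

lemma diff_prod_pos: "finite X \<Longrightarrow> diff_prod X > 0"
  unfolding diff_prod_def by (auto intro!: prod_pos)

lemma prod_fact_eq_diff_prod_hook_prod:
  assumes "finite X"
  shows "(\<Prod>x\<in>X. fact x) = diff_prod X * hook_prod X"
proof -
  have "fact x = (\<Prod>y\<in>{y\<in>X. y < x}. x - y) * (\<Prod>y\<in>{y. y < x \<and> y \<notin> X}. x - y)" for x :: nat
  proof -
    have "fact x = (\<Prod>y<x. x - y)"
      using fact_prod_rev[of x, where 'a = nat] by (simp add: atLeast0LessThan)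
    moreover have "{..<x} = {y\<in>X. y < x} \<union> {y. y < x \<and> y \<notin> X}" by auto
    ultimately show ?thesis by (metis (no_types, lifting) finite_Un finite_lessThan
          prod.union_disjoint disjoint_iff mem_Collect_eq)
  qed
  then show ?thesis unfolding diff_prod_def hook_prod_def by (simp add: prod.distrib)
qed

definition divisible_hooks :: "nat \<Rightarrow> nat set \<Rightarrow> nat \<Rightarrow> nat" where
  "divisible_hooks p X x = card {y. y < x \<and> y \<notin> X \<and> p dvd (x - y)}"

lemma divisible_hooks_runner:
  assumes "p > 0" "i < p"
  shows "divisible_hooks p X (i + p * q) = gaps_below (runner p X i) q"
proof -
  have "{y. y < i + p * q \<and> y \<notin> X \<and> p dvd (i + p * q - y)} =
        (\<lambda>q'. i + p * q') ` {q'. q' < q \<and> q' \<notin> runner p X i}"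
  proof (rule set_eqI, rule iffI)
    fix y assume "y \<in> {y. y < i + p * q \<and> y \<notin> X \<and> p dvd (i + p * q - y)}"
    then have y: "y < i + p * q" "y \<notin> X" "p dvd (i + p * q - y)" by auto
    then obtain t where "i + p * q - y = p * t" by (auto elim!: dvdE)
    then have yt: "y + p * t = i + p * q" using y(1) by simp
    have "t \<le> q"
    proof (rule ccontr)
      assume "\<not> t \<le> q"
      then have "p * t \<ge> p * (q + 1)" by (intro mult_le_mono2) simp
      then show False using yt assms by simp
    qed
    moreover have "t \<ge> 1" using yt y(1) by (cases t) auto
    moreover have "y = i + p * (q - t)" using yt \<open>t \<le> q\<close> by (simp add: diff_mult_distrib2)
    ultimately show "y \<in> (\<lambda>q'. i + p * q') ` {q'. q' < q \<and> q' \<notin> runner p X i}"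
      using y(2) by (auto simp: runner_def)
  next
    fix y assume "y \<in> (\<lambda>q'. i + p * q') ` {q'. q' < q \<and> q' \<notin> runner p X i}"
    then obtain q' where q': "y = i + p * q'" "q' < q" "q' \<notin> runner p X i" by auto
    then have "i + p * q - y = p * (q - q')" by (simp add: diff_mult_distrib2)
    then show "y \<in> {y. y < i + p * q \<and> y \<notin> X \<and> p dvd (i + p * q - y)}"
      using q' assms by (auto simp: runner_def)
  qed
  moreover have "inj (\<lambda>q'. i + p * q')" using assms by (auto simp: inj_def)
  ultimately show ?thesis unfolding divisible_hooks_def gaps_below_def
    by (simp add: card_image inj_on_def)
qed

lemma sum_divisible_hooks:
  assumes "p > 0" "finite X"
  shows "(\<Sum>x\<in>X. divisible_hooks p X x) = quotient_weight p X"
  unfolding sum_by_runners[OF assms] quotient_weight_def weight_def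
  using divisible_hooks_runner[OF assms(1)] by simp

lemma multiplicity_le_of_less_square:
  fixes p l :: nat
  assumes "prime p" "0 < l" "l < p ^ 2"
  shows "multiplicity p l \<le> (if p dvd l then 1 else 0)"
proof (cases "p dvd l")
  case True
  show ?thesis
  proof (rule ccontr)
    assume "\<not> ?thesis"
    then have "p ^ 2 dvd p ^ multiplicity p l" using True by (simp add: le_imp_power_dvd)
    then have "p ^ 2 dvd l" using multiplicity_dvd dvd_trans by blast
    then show False using assms(2,3) by (simp add: dvd_imp_le leD)
  qed
qed (simp add: not_dvd_imp_multiplicity_0)

text \<open>Below p^2 every hook contributes at most one factor p, and exactly when p divides it.\<close>

lemma multiplicity_hook_prod_le:
  assumes "prime p" "finite X" "weight X < p ^ 2"
  shows "multiplicity p (hook_prod X) \<le> quotient_weight p X"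
proof -
  have "multiplicity p (hook_prod X) =
      (\<Sum>x\<in>X. multiplicity p (\<Prod>y\<in>{y. y < x \<and> y \<notin> X}. x - y))"
    unfolding hook_prod_def
    by (rule prime_elem_multiplicity_prod_distrib) (use assms(1,2) in \<open>auto simp: prod_zero_iff\<close>)
  also have "\<dots> = (\<Sum>x\<in>X. \<Sum>y\<in>{y. y < x \<and> y \<notin> X}. multiplicity p (x - y))"
    by (intro sum.cong refl prime_elem_multiplicity_prod_distrib) (use assms(1) in auto)
  also have "\<dots> \<le> (\<Sum>x\<in>X. \<Sum>y\<in>{y. y < x \<and> y \<notin> X}. (if p dvd (x - y) then 1 else 0))"
  proof (intro sum_mono)
    fix x y assume "x \<in> X" "y \<in> {y. y < x \<and> y \<notin> X}"
    then have "x - y \<le> weight X" "0 < x - y" using hook_le_weight[OF assms(2)] by auto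
    then show "multiplicity p (x - y) \<le> (if p dvd (x - y) then 1 else 0)"
      using multiplicity_le_of_less_square[OF assms(1)] assms(3) by simp
  qed
  also have "\<dots> = (\<Sum>x\<in>X. divisible_hooks p X x)"
    unfolding divisible_hooks_def by (intro sum.cong refl) (simp add: sum.If_cases Int_def conj_assoc)
  also have "\<dots> = quotient_weight p X"
    using sum_divisible_hooks assms(1,2) prime_gt_0_nat by blast
  finally show ?thesis .
qed

section \<open>The branching rule and integrality of F\<close>

text \<open>The rational function shift_ratio X z has simple poles at the beads of X, with residues
  lagrange_coeff X x. Its partial fraction expansion, expanded at infinity, gives
  the sum of x * lagrange_coeff X x over X as weight X; since x * lagrange_coeff X x / hook_prod X
  is 1 / hook_prod of X with the bead x moved to x - 1, this is the branching rule.\<close>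

definition lagrange_coeff :: "nat set \<Rightarrow> nat \<Rightarrow> rat" where
  "lagrange_coeff X x = (\<Prod>y\<in>X - {x}. (of_nat x - 1 - of_nat y) / (of_nat x - of_nat y))"

definition shift_ratio :: "nat set \<Rightarrow> rat \<Rightarrow> rat" where
  "shift_ratio X z = (\<Prod>y\<in>X. (z - 1 - of_nat y) / (z - of_nat y))"

lemma lagrange_coeff_insert:
  assumes "finite S" "w \<notin> S" "x \<in> S"
  shows "lagrange_coeff (insert w S) x =
    lagrange_coeff S x * ((of_nat x - 1 - of_nat w) / (of_nat x - of_nat w))"
proof -
  have "insert w S - {x} = insert w (S - {x})" using assms by auto
  then show ?thesis unfolding lagrange_coeff_def using assms by (simp add: mult.commute)
qed

lemma lagrange_coeff_insert_self:
  assumes "w \<notin> S"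
  shows "lagrange_coeff (insert w S) w = shift_ratio S (of_nat w)"
  unfolding lagrange_coeff_def shift_ratio_def using assms by (simp add: insert_Diff_if)

lemma partial_fractions_shift_ratio:
  assumes "finite S" "z \<notin> of_nat ` S"
  shows "(\<Sum>x\<in>S. lagrange_coeff S x / (z - of_nat x)) = 1 - shift_ratio S z"
  using assms
proof (induct S arbitrary: z rule: finite_induct)
  case empty
  then show ?case by (simp add: shift_ratio_def)
next
  case (insert w S)
  let ?w = "of_nat w :: rat"
  have zw: "z \<noteq> ?w" using insert by auto
  have IHz: "(\<Sum>x\<in>S. lagrange_coeff S x / (z - of_nat x)) = 1 - shift_ratio S z"
    using insert by auto
  have "?w \<notin> of_nat ` S" using insert by auto
  then have IHw: "(\<Sum>x\<in>S. lagrange_coeff S x / (?w - of_nat x)) = 1 - shift_ratio S ?w"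
    using insert by blast
  have step: "r * ((a - 1 - b) / (a - b)) / (z - a) =
      r / (z - a) - (r / (z - a)) / (z - b) + (r / (b - a)) / (z - b)"
    if "a \<noteq> b" "z \<noteq> a" "z \<noteq> b" for a b r :: rat
    using that by (simp add: divide_simps) (simp add: algebra_simps)
  have "(\<Sum>x\<in>S. lagrange_coeff (insert w S) x / (z - of_nat x)) =
     (\<Sum>x\<in>S. lagrange_coeff S x / (z - of_nat x))
      - (\<Sum>x\<in>S. lagrange_coeff S x / (z - of_nat x)) / (z - ?w)
      + (\<Sum>x\<in>S. lagrange_coeff S x / (?w - of_nat x)) / (z - ?w)"
  proof -
    have "lagrange_coeff (insert w S) x / (z - of_nat x) =
      lagrange_coeff S x / (z - of_nat x) - (lagrange_coeff S x / (z - of_nat x)) / (z - ?w)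
      + (lagrange_coeff S x / (?w - of_nat x)) / (z - ?w)" if "x \<in> S" for x
      unfolding lagrange_coeff_insert[OF insert(1,2) that]
      using that insert zw by (intro step) auto
    then show ?thesis by (simp add: sum.distrib sum_subtractf sum_divide_distrib)
  qed
  then have "(\<Sum>x\<in>insert w S. lagrange_coeff (insert w S) x / (z - of_nat x)) =
     shift_ratio S ?w / (z - ?w) +
     ((1 - shift_ratio S z) - (1 - shift_ratio S z) / (z - ?w) + (1 - shift_ratio S ?w) / (z - ?w))"
    using insert lagrange_coeff_insert_self[OF insert(2)] by (simp add: IHz IHw)
  also have "\<dots> = 1 - shift_ratio S z * ((z - 1 - ?w) / (z - ?w))"
    using zw by (simp add: divide_simps) (simp add: algebra_simps)
  also have "\<dots> = 1 - shift_ratio (insert w S) z"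
    unfolding shift_ratio_def using insert by (simp add: mult.commute)
  finally show ?case .
qed

lemma sum_lagrange_coeff_moments:
  assumes "finite S"
  shows "(\<Sum>x\<in>S. lagrange_coeff S x) = of_nat (card S) \<and>
         (\<Sum>x\<in>S. of_nat x * lagrange_coeff S x) =
           of_nat (\<Sum>S) - of_nat (card S) * (of_nat (card S) - 1) / 2"
  using assms
proof (induct S rule: finite_induct)
  case empty
  then show ?case by simp
next
  case (insert w S)
  let ?w = "of_nat w :: rat" and ?c = "\<lambda>x. lagrange_coeff S x / (of_nat w - of_nat x)"
  have "?w \<notin> of_nat ` S" using insert by auto
  then have pf: "(\<Sum>x\<in>S. ?c x) = 1 - shift_ratio S ?w"
    using partial_fractions_shift_ratio[OF insert(1)] by blast
  have t0: "lagrange_coeff (insert w S) x = lagrange_coeff S x + ?c x"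
   and t1: "of_nat x * lagrange_coeff (insert w S) x =
      of_nat x * lagrange_coeff S x - lagrange_coeff S x + ?w * ?c x" if "x \<in> S" for x
  proof -
    have "?w - of_nat x \<noteq> 0" "of_nat x - ?w \<noteq> 0" using that insert by auto
    then show "lagrange_coeff (insert w S) x = lagrange_coeff S x + ?c x"
      "of_nat x * lagrange_coeff (insert w S) x =
        of_nat x * lagrange_coeff S x - lagrange_coeff S x + ?w * ?c x"
      unfolding lagrange_coeff_insert[OF insert(1,2) that] by (simp_all add: field_simps)
  qed
  have "(\<Sum>x\<in>S. lagrange_coeff (insert w S) x) = (\<Sum>x\<in>S. lagrange_coeff S x) + (1 - shift_ratio S ?w)"
    using t0 pf by (simp add: sum.distrib)
  moreover have "(\<Sum>x\<in>S. of_nat x * lagrange_coeff (insert w S) x) =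
      (\<Sum>x\<in>S. of_nat x * lagrange_coeff S x) - (\<Sum>x\<in>S. lagrange_coeff S x) + ?w * (1 - shift_ratio S ?w)"
  proof -
    have "(\<Sum>x\<in>S. ?w * ?c x) = ?w * (1 - shift_ratio S ?w)"
      unfolding sum_distrib_left[symmetric] pf ..
    then show ?thesis using t1 by (simp add: sum.distrib sum_subtractf)
  qed
  ultimately show ?case
    using insert lagrange_coeff_insert_self[OF insert(2)] by (simp add: field_simps)
qed

lemma sum_times_lagrange_coeff:
  assumes "finite X"
  shows "(\<Sum>x\<in>X. of_nat x * lagrange_coeff X x) = of_nat (weight X)"
proof -
  have "(2::rat) * of_nat (card X choose 2) = of_nat (card X) * (of_nat (card X) - 1)"
    using arg_cong[OF two_times_choose2[of "card X"], of "of_nat :: nat \<Rightarrow> rat"]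
    by (cases "card X") (simp_all add: algebra_simps)
  then show ?thesis
    using sum_lagrange_coeff_moments[OF assms] sum_eq_choose2_plus_weight[OF assms] by simp
qed

lemma lagrange_coeff_eq_0:
  assumes "finite X" "x \<in> X" "x \<ge> 1" "x - 1 \<in> X"
  shows "lagrange_coeff X x = 0"
  unfolding lagrange_coeff_def
proof (rule prod_zero)
  show "\<exists>y\<in>X - {x}. (of_nat x - 1 - of_nat y) / (of_nat x - of_nat y) = (0::rat)"
    using assms by (intro bexI[of _ "x - 1"]) (auto simp: of_nat_diff)
qed (use assms in simp)

lemma diff_prod_insert:
  assumes "finite Y" "a \<notin> Y"
  shows "diff_prod (insert a Y) =
    diff_prod Y * (\<Prod>y\<in>{y\<in>Y. y < a}. a - y) * (\<Prod>y\<in>{y\<in>Y. a < y}. y - a)"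
proof -
  have "diff_prod (insert a Y) = (\<Prod>y\<in>{y\<in>insert a Y. y < a}. a - y) *
          (\<Prod>x\<in>Y. \<Prod>y\<in>{y\<in>insert a Y. y < x}. x - y)"
    unfolding diff_prod_def using assms by simp
  also have "{y\<in>insert a Y. y < a} = {y\<in>Y. y < a}" by auto
  also have "(\<Prod>x\<in>Y. \<Prod>y\<in>{y\<in>insert a Y. y < x}. x - y) =
       (\<Prod>x\<in>Y. (\<Prod>y\<in>{y\<in>Y. y < x}. x - y) * (if a < x then x - a else 1))"
  proof (rule prod.cong[OF refl])
    fix x assume "x \<in> Y"
    show "(\<Prod>y\<in>{y\<in>insert a Y. y < x}. x - y) = (\<Prod>y\<in>{y\<in>Y. y < x}. x - y) * (if a < x then x - a else 1)"
    proof (cases "a < x")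
      case True
      then have "{y\<in>insert a Y. y < x} = insert a {y\<in>Y. y < x}" by auto
      then show ?thesis using True assms by (simp add: mult.commute)
    next
      case False
      then have "{y\<in>insert a Y. y < x} = {y\<in>Y. y < x}" by auto
      then show ?thesis using False by simp
    qed
  qed
  also have "\<dots> = diff_prod Y * (\<Prod>y\<in>{y\<in>Y. a < y}. y - a)"
    unfolding diff_prod_def using assms(1) by (simp add: prod.distrib prod.If_cases Int_def)
  finally show ?thesis by (simp add: mult.commute mult.left_commute)
qed

lemma inverse_hook_prod:
  assumes "finite X"
  shows "1 / (of_nat (hook_prod X) :: rat) = of_nat (diff_prod X) / (\<Prod>x\<in>X. fact x)"
proof -
  have "(\<Prod>x\<in>X. fact x :: rat) = of_nat (diff_prod X) * of_nat (hook_prod X)"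
    using arg_cong[OF prod_fact_eq_diff_prod_hook_prod[OF assms], of "of_nat :: nat \<Rightarrow> rat"]
    by (simp add: of_nat_prod)
  then show ?thesis using hook_prod_pos[OF assms] diff_prod_pos[OF assms] by (simp add: field_simps)
qed

text \<open>Moving a bead x to a free position x - 1 removes one box from the partition.\<close>

definition removable_beads :: "nat set \<Rightarrow> nat set" where
  "removable_beads X = {x\<in>X. 1 \<le> x \<and> x - 1 \<notin> X}"

definition remove_box :: "nat set \<Rightarrow> nat \<Rightarrow> nat set" where
  "remove_box X x = insert (x - 1) (X - {x})"

lemma lagrange_coeff_removable:
  assumes "finite X" "x \<in> removable_beads X"
  defines "Y \<equiv> X - {x}"
  shows "lagrange_coeff X x =
    (of_nat (\<Prod>y\<in>{y\<in>Y. y < x}. x - 1 - y) / of_nat (\<Prod>y\<in>{y\<in>Y. y < x}. x - y)) *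
    (of_nat (\<Prod>y\<in>{y\<in>Y. x < y}. y - (x - 1)) / of_nat (\<Prod>y\<in>{y\<in>Y. x < y}. y - x))"
proof -
  let ?f = "\<lambda>y. (of_nat x - 1 - of_nat y) / (of_nat x - of_nat y :: rat)"
  have x: "x \<in> X" "1 \<le> x" "x - 1 \<notin> X" using assms(2) by (auto simp: removable_beads_def)
  have split: "{y\<in>Y. y < x} \<union> {y\<in>Y. x < y} = Y" by (auto simp: Y_def)
  have "prod ?f ({y\<in>Y. y < x} \<union> {y\<in>Y. x < y}) =
      prod ?f {y\<in>Y. y < x} * prod ?f {y\<in>Y. x < y}"
    by (rule prod.union_disjoint) (use assms(1) in \<open>auto simp: Y_def\<close>)
  then have "lagrange_coeff X x = prod ?f {y\<in>Y. y < x} * prod ?f {y\<in>Y. x < y}"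
    unfolding lagrange_coeff_def Y_def[symmetric] split .
  also have "prod ?f {y\<in>Y. y < x} = (\<Prod>y\<in>{y\<in>Y. y < x}. of_nat (x - 1 - y) / of_nat (x - y))"
  proof (rule prod.cong[OF refl])
    fix y assume "y \<in> {y\<in>Y. y < x}"
    then have "y < x" "y \<noteq> x - 1" using x(3) by (auto simp: Y_def)
    then have "y < x - 1" by linarith
    then show "?f y = of_nat (x - 1 - y) / of_nat (x - y)" by (simp add: of_nat_diff)
  qed
  also have "prod ?f {y\<in>Y. x < y} = (\<Prod>y\<in>{y\<in>Y. x < y}. of_nat (y - (x - 1)) / of_nat (y - x))"
  proof (rule prod.cong[OF refl])
    fix y assume "y \<in> {y\<in>Y. x < y}"
    then have e: "of_nat x - 1 - of_nat y = - (of_nat (y - (x - 1)) :: rat)"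
      "of_nat x - of_nat y = - (of_nat (y - x) :: rat)" using x(2) by (simp_all add: of_nat_diff)
    show "?f y = of_nat (y - (x - 1)) / of_nat (y - x)"
      unfolding e by (rule minus_divide_divide)
  qed
  finally show ?thesis by (simp add: of_nat_prod prod_dividef)
qed

lemma inverse_hook_prod_remove_box:
  assumes "finite X" "x \<in> removable_beads X"
  shows "1 / of_nat (hook_prod (remove_box X x)) =
    1 / (of_nat (hook_prod X) :: rat) * (of_nat x * lagrange_coeff X x)"
proof -
  define Y where "Y = X - {x}"
  have x: "x \<in> X" "1 \<le> x" "x - 1 \<notin> X" using assms(2) by (auto simp: removable_beads_def)
  have fY: "finite Y" using assms by (simp add: Y_def)
  have xY: "x \<notin> Y" "x - 1 \<notin> Y" using x by (auto simp: Y_def)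
  have XY: "X = insert x Y" using x by (auto simp: Y_def)
  have "y < x - 1 \<longleftrightarrow> y < x" "x - 1 < y \<longleftrightarrow> x < y" if "y \<in> Y" for y
  proof -
    have "y \<noteq> x" "y \<noteq> x - 1" using that xY by auto
    then show "y < x - 1 \<longleftrightarrow> y < x" "x - 1 < y \<longleftrightarrow> x < y" using x(2) by arith+
  qed
  then have below: "{y\<in>Y. y < x - 1} = {y\<in>Y. y < x}" and above: "{y\<in>Y. x - 1 < y} = {y\<in>Y. x < y}"
    by auto
  define L where "L = (\<Prod>y\<in>{y\<in>Y. y < x}. x - y)"
  define U where "U = (\<Prod>y\<in>{y\<in>Y. x < y}. y - x)"
  define L' where "L' = (\<Prod>y\<in>{y\<in>Y. y < x}. x - 1 - y)"
  define U' where "U' = (\<Prod>y\<in>{y\<in>Y. x < y}. y - (x - 1))"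
  have LU: "L > 0" "U > 0" unfolding L_def U_def by (auto intro!: prod_pos)
  have D: "diff_prod X = diff_prod Y * L * U" "diff_prod (insert (x - 1) Y) = diff_prod Y * L' * U'"
    unfolding XY L_def U_def L'_def U'_def diff_prod_insert[OF fY xY(1)] diff_prod_insert[OF fY xY(2)]
      below above by simp_all
  have F: "(\<Prod>z\<in>X. fact z :: rat) = (\<Prod>z\<in>Y. fact z) * (of_nat x * fact (x - 1))"
    "(\<Prod>z\<in>insert (x - 1) Y. fact z :: rat) = (\<Prod>z\<in>Y. fact z) * fact (x - 1)"
    unfolding XY using fY xY x(2) by (simp_all add: fact_reduce[of x])
  have r: "lagrange_coeff X x = (of_nat L' / of_nat L) * (of_nat U' / of_nat U)"
    using lagrange_coeff_removable[OF assms] unfolding L_def U_def L'_def U'_def Y_def by simp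
  have "(\<Prod>z\<in>Y. fact z :: rat) \<noteq> 0" using fY by (auto simp: prod_zero_iff)
  then show ?thesis
    unfolding remove_box_def Y_def[symmetric] inverse_hook_prod[OF assms(1)]
      inverse_hook_prod[OF finite_insert[THEN iffD2, OF fY]] D F r
    using LU x(2) by (simp add: field_simps)
qed

lemma weight_remove_box:
  assumes "finite X" "x \<in> removable_beads X"
  shows "weight (remove_box X x) + 1 = weight X"
proof -
  define Y where "Y = X - {x}"
  have x: "x \<in> X" "1 \<le> x" "x - 1 \<notin> X" using assms(2) by (auto simp: removable_beads_def)
  have fY: "finite Y" and xY: "x \<notin> Y" "x - 1 \<notin> Y" and XY: "X = insert x Y"
    using assms(1) x by (auto simp: Y_def)
  have "\<Sum>X = \<Sum>Y + x" "\<Sum>(insert (x - 1) Y) = \<Sum>Y + (x - 1)" "card X = card (insert (x - 1) Y)"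
    unfolding XY using fY xY by simp_all
  then show ?thesis
    using sum_eq_choose2_plus_weight[OF assms(1)] sum_eq_choose2_plus_weight[of "insert (x - 1) Y"]
      fY x(2) unfolding remove_box_def Y_def by simp
qed

lemma branching_rule:
  assumes "finite X"
  shows "of_nat (weight X) / (of_nat (hook_prod X) :: rat) =
         (\<Sum>x\<in>removable_beads X. 1 / of_nat (hook_prod (remove_box X x)))"
proof -
  have "of_nat (weight X) / (of_nat (hook_prod X) :: rat) =
      (\<Sum>x\<in>X. 1 / of_nat (hook_prod X) * (of_nat x * lagrange_coeff X x))"
    unfolding sum_distrib_left[symmetric] sum_times_lagrange_coeff[OF assms] by simp
  also have "\<dots> = (\<Sum>x\<in>removable_beads X. 1 / of_nat (hook_prod (remove_box X x)))"
  proof (rule sum.mono_neutral_cong_right)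
    show "\<forall>x\<in>X - removable_beads X. 1 / of_nat (hook_prod X) * (of_nat x * lagrange_coeff X x) = 0"
      using lagrange_coeff_eq_0[OF assms] by (auto simp: removable_beads_def not_le)
  qed (use assms inverse_hook_prod_remove_box in \<open>auto simp: removable_beads_def\<close>)
  finally show ?thesis .
qed

lemma fact_weight_div_hook_prod_in_Ints:
  "finite X \<Longrightarrow> (fact (weight X) :: rat) / of_nat (hook_prod X) \<in> \<int>"
proof (induct "weight X" arbitrary: X)
  case 0
  then have no_gaps: "\<forall>x\<in>X. {y. y < x \<and> y \<notin> X} = {}"
    by (simp add: weight_def gaps_below_def)
  have "hook_prod X = (\<Prod>x\<in>X. 1)"
    unfolding hook_prod_def by (intro prod.cong refl) (simp add: no_gaps)
  then have "hook_prod X = 1" by simp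
  then show ?case using 0 by simp
next
  case (Suc k)
  have "(fact (weight X) :: rat) / of_nat (hook_prod X) = fact k * (of_nat (weight X) / of_nat (hook_prod X))"
    unfolding Suc(2)[symmetric] by simp
  also have "\<dots> = (\<Sum>x\<in>removable_beads X. fact k / of_nat (hook_prod (remove_box X x)))"
    unfolding branching_rule[OF Suc(3)] by (simp add: sum_distrib_left)
  also have "\<dots> \<in> \<int>"
  proof (rule Ints_sum)
    fix x assume "x \<in> removable_beads X"
    then have "k = weight (remove_box X x)" using weight_remove_box[OF Suc(3)] Suc(2) by force
    moreover have "finite (remove_box X x)" using Suc(3) by (simp add: remove_box_def)
    ultimately show "(fact k :: rat) / of_nat (hook_prod (remove_box X x)) \<in> \<int>" using Suc(1) by simp
  qed
  finally show ?case .
qed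

lemma hook_prod_dvd_fact_weight:
  assumes "finite X"
  shows "hook_prod X dvd fact (weight X)"
proof -
  obtain z where "(fact (weight X) :: rat) / of_nat (hook_prod X) = of_int z"
    using fact_weight_div_hook_prod_in_Ints[OF assms] Ints_cases by metis
  then have "(fact (weight X) :: rat) = of_int z * of_nat (hook_prod X)"
    using hook_prod_pos[OF assms] by (simp add: field_simps)
  then have "int (fact (weight X)) = z * int (hook_prod X)"
    by (metis of_int_eq_iff of_int_mult of_int_of_nat_eq of_nat_fact)
  then show ?thesis by (metis dvd_triv_right of_nat_dvd_iff)
qed

lemma sum_lessThan_eq_choose2: "(\<Sum>j<r. j) = r choose 2"
  by (induct r) (simp_all add: Suc_choose2)

lemma deg_strict_mono:
  assumes "is_partition lam" "i < j" "j < length lam"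
  shows "deg lam i < deg lam j"
proof -
  let ?r = "length lam"
  have "lam ! (?r - 1 - j) \<ge> lam ! (?r - 1 - i)"
    using sorted_wrt_nth_less[of "(\<ge>)" lam "?r - 1 - j" "?r - 1 - i"] assms
    unfolding is_partition_def by simp
  then show ?thesis unfolding deg_def using assms(2) by simp
qed

lemma inj_on_deg: "is_partition lam \<Longrightarrow> inj_on (deg lam) {..<length lam}"
  unfolding inj_on_def by (metis deg_strict_mono lessThan_iff linorder_neqE_nat less_irrefl)

lemma finite_beta_set: "finite (beta_set lam)"
  unfolding beta_set_def by simp

lemma card_beta_set: "is_partition lam \<Longrightarrow> card (beta_set lam) = length lam"
  unfolding beta_set_def using inj_on_deg card_image by fastforce

lemma weight_beta_set:
  assumes "is_partition lam"
  shows "weight (beta_set lam) = sum_list lam"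
proof -
  let ?r = "length lam"
  have "\<Sum>(beta_set lam) = (\<Sum>j<?r. deg lam j)"
    unfolding beta_set_def using sum.reindex[OF inj_on_deg[OF assms], of id] by simp
  also have "\<dots> = (\<Sum>j<?r. lam ! (?r - Suc j)) + (\<Sum>j<?r. j)"
    unfolding deg_def by (simp add: sum.distrib)
  also have "(\<Sum>j<?r. lam ! (?r - Suc j)) = sum_list lam"
    by (simp add: sum.nat_diff_reindex sum_list_sum_nth atLeast0LessThan)
  also have "(\<Sum>j<?r. j) = ?r choose 2"
    by (simp add: sum_lessThan_eq_choose2)
  finally show ?thesis
    using sum_eq_choose2_plus_weight[OF finite_beta_set] card_beta_set[OF assms] by simp
qed

lemma beta_set_below_deg:
  assumes "is_partition lam" "j < length lam"
  shows "{y\<in>beta_set lam. y < deg lam j} = deg lam ` {..<j}"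
proof
  show "{y\<in>beta_set lam. y < deg lam j} \<subseteq> deg lam ` {..<j}"
  proof
    fix y assume "y \<in> {y\<in>beta_set lam. y < deg lam j}"
    then obtain i where i: "i < length lam" "y = deg lam i" "deg lam i < deg lam j"
      unfolding beta_set_def by auto
    then have "i < j" using deg_strict_mono[OF assms(1) _ i(1), of j]
      by (metis linorder_neqE_nat not_less_iff_gr_or_eq)
    then show "y \<in> deg lam ` {..<j}" using i by auto
  qed
  show "deg lam ` {..<j} \<subseteq> {y\<in>beta_set lam. y < deg lam j}"
    using assms deg_strict_mono unfolding beta_set_def by auto
qed

lemma Delta_eq_diff_prod:
  assumes "is_partition lam"
  shows "Delta lam = int (diff_prod (beta_set lam))"
proof -
  let ?r = "length lam" and ?X = "beta_set lam"
  have "diff_prod ?X = (\<Prod>j<?r. \<Prod>y\<in>{y\<in>?X. y < deg lam j}. deg lam j - y)"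
    unfolding diff_prod_def beta_set_def using prod.reindex[OF inj_on_deg[OF assms]]
    by (simp add: beta_set_def[symmetric] comp_def)
  also have "\<dots> = (\<Prod>j<?r. \<Prod>i<j. deg lam j - deg lam i)"
  proof (rule prod.cong[OF refl])
    fix j assume j: "j \<in> {..<?r}"
    have "inj_on (deg lam) {..<j}" using inj_on_deg[OF assms] j by (auto intro: inj_on_subset)
    then show "(\<Prod>y\<in>{y\<in>?X. y < deg lam j}. deg lam j - y) = (\<Prod>i<j. deg lam j - deg lam i)"
      unfolding beta_set_below_deg[OF assms j[simplified]] using prod.reindex by (simp add: comp_def)
  qed
  finally have "int (diff_prod ?X) = (\<Prod>j<?r. \<Prod>i<j. int (deg lam j - deg lam i))"
    by (simp add: of_nat_prod)
  also have "\<dots> = (\<Prod>j<?r. \<Prod>i<j. int (deg lam j) - int (deg lam i))"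
    by (intro prod.cong refl) (use deg_strict_mono[OF assms] in \<open>auto simp: of_nat_diff less_imp_le\<close>)
  finally show ?thesis unfolding Delta_def by simp
qed

lemma F_eq_fact_div_hook_prod:
  assumes "is_partition lam"
  shows "F lam = fact (sum_list lam) / of_nat (hook_prod (beta_set lam))"
proof -
  let ?X = "beta_set lam"
  have "of_int (\<Prod>j<length lam. fact (deg lam j)) = (\<Prod>x\<in>?X. fact x :: rat)"
    unfolding beta_set_def using prod.reindex[OF inj_on_deg[OF assms], of "fact :: nat \<Rightarrow> rat"]
    by (simp add: comp_def of_int_prod)
  then have "F lam = fact (sum_list lam) * (of_nat (diff_prod ?X) / (\<Prod>x\<in>?X. fact x))"
    unfolding F_def H_def Delta_eq_diff_prod[OF assms] by simp
  then show ?thesis unfolding inverse_hook_prod[OF finite_beta_set, symmetric] by simp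
qed

lemma F_nat_mult_hook_prod:
  assumes "is_partition lam"
  shows "F_nat lam * hook_prod (beta_set lam) = fact (sum_list lam)"
proof -
  let ?X = "beta_set lam"
  obtain c where c: "fact (sum_list lam) = hook_prod ?X * c"
    using hook_prod_dvd_fact_weight[OF finite_beta_set] weight_beta_set[OF assms] by (metis dvdE)
  have "F lam = of_nat c"
    unfolding F_eq_fact_div_hook_prod[OF assms] using c hook_prod_pos[OF finite_beta_set, of lam]
    by (simp add: field_simps) (metis of_nat_fact of_nat_mult)
  then show ?thesis unfolding F_nat_def using c by simp
qed

lemma multiplicity_fact_eq:
  assumes "is_partition lam" "prime p"
  shows "multiplicity p (fact (sum_list lam) :: nat) =
    multiplicity p (F_nat lam) + multiplicity p (hook_prod (beta_set lam))"
proof -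
  have "F_nat lam \<noteq> 0" "hook_prod (beta_set lam) \<noteq> 0"
    using F_nat_mult_hook_prod[OF assms(1)] by (metis fact_nonzero mult_zero_left mult_zero_right)+
  then show ?thesis
    unfolding F_nat_mult_hook_prod[OF assms(1), symmetric]
    using assms(2) by (simp add: prime_elem_multiplicity_mult_distrib)
qed

lemma Suc_choose2_le_weight:
  assumes "finite X" "alt_sum X = int m + 1 \<or> alt_sum X = - int m"
  shows "Suc m choose 2 \<le> weight X"
proof -
  have "int m * (int m + 1) = alt_sum X * (alt_sum X - 1)" using assms(2) by (auto simp: algebra_simps)
  then show ?thesis using alt_sum_bound_weight[OF assms(1)] two_times_Suc_choose2_int[of m] by simp
qed

lemma mult_pred_mono:
  fixes s t :: int
  assumes "0 \<le> s" "s \<le> t"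
  shows "s * (s - 1) \<le> t * (t - 1)"
proof -
  have "t * (t - 1) - s * (s - 1) = (t - s) * (t + s - 1)" by (simp add: algebra_simps)
  moreover have "(t - s) * (t + s - 1) \<ge> 0"
    using assms by (cases "t = s") (simp_all add: zero_le_mult_iff)
  ultimately show ?thesis by linarith
qed

text \<open>The alternating sums of X and of its p-core differ by at most twice the quotient
  weight P, so the p-core still has a large 2-core.\<close>

lemma weight_core_lower_bound:
  assumes "odd p" "finite X" "alt_sum X = int m + 1 \<or> alt_sum X = - int m"
    and "2 * quotient_weight p X \<le> m + 1"
  defines "s \<equiv> int m + 1 - 2 * int (quotient_weight p X)"
  shows "s * (s - 1) \<le> 2 * int (weight (core p X))"
proof -
  let ?d = "alt_sum (core p X)"
  define t where "t = (if alt_sum X = int m + 1 then ?d else 1 - ?d)"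
  have "p > 0" using assms(1) by presburger
  have "s \<le> t"
    using alt_sum_diff_core[OF assms(1,2)] assms(3) unfolding t_def s_def by (auto simp: abs_le_iff)
  moreover have "0 \<le> s" using assms(4) unfolding s_def by linarith
  ultimately have "s * (s - 1) \<le> t * (t - 1)" by (rule mult_pred_mono[rotated])
  also have "t * (t - 1) = ?d * (?d - 1)" unfolding t_def by (simp add: algebra_simps)
  also have "\<dots> \<le> 2 * int (weight (core p X))"
    using alt_sum_bound_weight finite_core[OF \<open>p > 0\<close> assms(2)] by blast
  finally show ?thesis .
qed

lemma NN_double:
  assumes "j \<le> (m + 1) div 2"
  shows "2 * NN m p j = 2 * int j * int p + (int m + 1 - 2 * int j) * (int m - 2 * int j)"
  using assms two_times_Suc_choose2_int[of m] unfolding NN_def by (simp add: algebra_simps)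

lemma NN_mono:
  assumes "2 * m \<le> p + 1" "1 \<le> j" "j \<le> j'" "j' \<le> (m + 1) div 2"
  shows "NN m p j \<le> NN m p j'"
proof -
  have "NN m p j' - NN m p j =
      (int j' - int j) * (int p - 2 * int m - 1 + 2 * int j' + 2 * int j)"
    using assms(3,4) unfolding NN_def by (simp add: algebra_simps)
  moreover have "0 \<le> (int j' - int j) * (int p - 2 * int m - 1 + 2 * int j' + 2 * int j)"
    using assms(1-3) by simp
  ultimately show ?thesis by linarith
qed

lemma NN_le:
  assumes "2 * m \<le> p + 1" "1 \<le> k" "k \<le> (m + 1) div 2 + 1"
  shows "NN m p k \<le> int ((m + 1) div 2 + 1) * int p"
proof (cases "k \<le> (m + 1) div 2")
  case True
  let ?h = "(m + 1) div 2"
  have zero: "(int m + 1 - 2 * int ?h) * (int m - 2 * int ?h) = 0"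
    by (cases "even m") (auto elim!: evenE oddE)
  have "NN m p ?h = int ?h * int p" using NN_double[of ?h m p, unfolded zero] by simp
  moreover have "NN m p k \<le> NN m p ?h" using NN_mono[OF assms(1,2) True] by simp
  ultimately show ?thesis by (simp add: algebra_simps)
next
  case False
  then have "k = (m + 1) div 2 + 1" using assms(3) by simp
  then show ?thesis by (simp add: NN_def)
qed

lemma quotient_weight_less:
  assumes "prime p" "2 * m \<le> p + 1" "1 \<le> k" "k \<le> (m + 1) div 2 + 1"
    and "finite X" "int (weight X) < NN m p k"
    and "alt_sum X = int m + 1 \<or> alt_sum X = - int m"
  shows "quotient_weight p X < k"
proof (rule ccontr)
  let ?P = "quotient_weight p X" and ?h = "(m + 1) div 2"
  assume "\<not> ?P < k"
  then have kP: "k \<le> ?P" by simp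
  have "p > 0" using assms(1) prime_gt_0_nat by blast
  have decomp: "weight X = weight (core p X) + p * ?P"
    using weight_eq_core_plus_quotient[OF \<open>p > 0\<close> assms(5)] .
  show False
  proof (cases "?P \<le> ?h")
    case False
    then have "(?h + 1) * p \<le> ?P * p" by (intro mult_le_mono1) simp
    then have "(?h + 1) * p \<le> weight X" using decomp by (simp add: mult.commute)
    then have "int (?h + 1) * int p \<le> int (weight X)" by (metis of_nat_le_iff of_nat_mult)
    then show False using NN_le[OF assms(2-4)] assms(6) by linarith
  next
    case True
    have Ph: "2 * ?P \<le> m + 1" using True by linarith
    have "(int m + 1 - 2 * int ?P) * (int m - 2 * int ?P) \<le> 2 * int (weight (core p X))"
    proof (cases "p = 2")
      case True
      then have "2 * ?P = m \<or> 2 * ?P = m + 1" using Ph assms(2,3) kP by auto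
      then have "2 * int ?P = int m \<or> 2 * int ?P = int m + 1" by linarith
      then show ?thesis by auto
    next
      case False
      then have "odd p" using assms(1) prime_odd_nat prime_ge_2_nat by (metis le_neq_implies_less)
      then show ?thesis using weight_core_lower_bound[OF _ assms(5,7) Ph] by (simp add: algebra_simps)
    qed
    moreover have "int (weight X) = int (weight (core p X)) + int p * int ?P" using decomp by simp
    moreover have "2 * int ?P * int p = 2 * (int p * int ?P)" by simp
    ultimately have "NN m p ?P \<le> int (weight X)" using NN_double[OF True, of p] by linarith
    then show False using NN_mono[OF assms(2,3) kP True] assms(6) by linarith
  qed
qed

lemma pos_of_weight_less_NN:
  assumes "finite X" "alt_sum X = int m + 1 \<or> alt_sum X = - int m" "int (weight X) < NN m p k"
  shows "0 < k"
proof (rule ccontr)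
  assume "\<not> 0 < k"
  then have "NN m p k = int (Suc m choose 2)" by (simp add: NN_def)
  then show False using Suc_choose2_le_weight[OF assms(1,2)] assms(3) by linarith
qed

lemma NN_le_square:
  assumes "2 * m \<le> p + 1" "2 \<le> p" "0 < k" "k \<le> (m + 1) div 2 + 1"
  shows "NN m p k \<le> int (p ^ 2)"
proof -
  have "(m + 1) div 2 + 1 \<le> p" using assms(1,2) by presburger
  then have "int ((m + 1) div 2 + 1) * int p \<le> int p * int p" by (intro mult_right_mono) simp_all
  then show ?thesis using NN_le[OF assms(1) _ assms(4)] assms(3) by (simp add: power2_eq_square)
qed

lemma multiplicity_F_nat_ge:
  assumes "prime p" "2 * m \<le> p + 1" "k \<le> (m + 1) div 2 + 1"
    and "is_partition lam" "has_2core_size lam (Suc m choose 2)"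
    and "int (sum_list lam) < NN m p k"
  shows "int (multiplicity p (fact (sum_list lam) :: nat)) - (int k - 1) \<le> int (multiplicity p (F_nat lam))"
proof -
  let ?X = "beta_set lam"
  have X: "finite ?X" "alt_sum ?X = int m + 1 \<or> alt_sum ?X = - int m" "int (weight ?X) < NN m p k"
    using finite_beta_set has_2core_size_Suc_choose2[OF assms(5)] weight_beta_set[OF assms(4)] assms(6)
    by auto
  have "0 < k" using pos_of_weight_less_NN[OF X] .
  then have "quotient_weight p ?X < k" using quotient_weight_less[OF assms(1-2) _ assms(3) X(1,3,2)] by simp
  moreover have "weight ?X < p ^ 2"
    using NN_le_square[OF assms(2) prime_ge_2_nat[OF assms(1)] \<open>0 < k\<close> assms(3)] X(3) by linarith
  ultimately have "multiplicity p (hook_prod ?X) < k"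
    using multiplicity_hook_prod_le[OF assms(1) X(1)] by linarith
  then show ?thesis using multiplicity_fact_eq[OF assms(4,1)] by linarith
qed

theorem mainTheorem8:
  fixes m p k n :: nat
  assumes "m \<ge> 1" and "prime p" and "p \<ge> 2 * m - 1"
    and "k \<le> (m + 1) div 2 + 1"
    and "int n < NN m p k"
  shows "ex n m p \<ge> ereal (real_of_int (int (multiplicity p (fact n :: nat)) - (int k - 1)))"
  unfolding ex_def
proof (rule Inf_greatest)
  fix e assume "e \<in> {ereal (real (multiplicity p (F_nat lam))) | lam.
       is_partition lam \<and> sum_list lam = n \<and> has_2core_size lam (Suc m choose 2)}"
  then obtain lam where lam: "e = ereal (real (multiplicity p (F_nat lam)))" "is_partition lam"
    "sum_list lam = n" "has_2core_size lam (Suc m choose 2)" by blast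
  have "2 * m \<le> p + 1" using assms(1,3) by simp
  then have "int (multiplicity p (fact n :: nat)) - (int k - 1) \<le> int (multiplicity p (F_nat lam))"
    using multiplicity_F_nat_ge[OF assms(2) _ assms(4) lam(2,4)] lam(3) assms(5) by simp
  then show "ereal (real_of_int (int (multiplicity p (fact n :: nat)) - (int k - 1))) \<le> e"
    unfolding lam(1) by (simp del: of_int_diff)
qed

end
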